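(* Let $G=(X\cup Y,E)$ be a connected convex bipartite graph with a lex-convex ordering $\sigma=(x_1,\ldots,x_{n_1},y_1,\ldots,y_{n_2})$, and let $(H_1,J_1,H_2,J_2,\ldots)$ be the chain decomposition of $G$ with respect to $\sigma$. Let $y_{r'}=right(x_1)$, $x_r=right(y_1)$, $y_s=right(x_r)$, and assume $s<n_2$; let $x_l=left(y_{s+1})$ and $x_p=right(y_{s+1})$. Then at least one of the following holds: (a) there exists a minimum vertex-edge dominating set $D$ of $G$ with $x_r\in D$; (b) there exists a minimum vertex-edge dominating set $D$ of $G$ with $y_\alpha\in D$, where $\alpha=\max\{i : 1\le i\le r' \text{ and } y_i \text{ is adjacent to every vertex of } J_1\}$ (in particular this set of indices is nonempty, and $y_\alpha\in N_G(x_1)$).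
   Context: All graphs are finite, simple and undirected. $N_G(v)$ is the open neighbourhood and $N_G[v]=N_G(v)\cup\{v\}$. An edge $uv$ is ve-dominated by a vertex $w$ if $w\in N_G[u]\cup N_G[v]$. A vertex-edge dominating set (VED-set) of $G$ is a set $D\subseteq V(G)$ such that every edge $uv$ satisfies $|(N_G[u]\cup N_G[v])\cap D|\ge 1$; $\gamma_{ve}(G)$ is the minimum size of a VED-set, and a minimum VED-set is one of that size. A bipartite graph $G=(X\cup Y,E)$ is convex (with respect to $Y$) if $Y$ can be ordered $y_1,\dots,y_{n_2}$ so that for every $x\in X$, $N_G(x)$ is a set of consecutive vertices in this order. Given an ordering $\sigma=(x_1,\dots,x_{n_1},y_1,\dots,y_{n_2})$, for a vertex $v$, $left(v)$ and $right(v)$ denote the neighbours of $v$ of minimum and maximum index in $\sigma$ respectively; for $x_i,x_j$, $left(x_i)\prec left(x_j)$ (resp. $\preceq$) means the index of $left(x_i)$ is less than (resp. at most) that of $left(x_j)$, and similarly for $right$. $\sigma$ is lex-convex if the order on $Y$ is a convex ordering and for all $i<j$ either $left(x_i)\prec left(x_j)$, or $left(x_i)=left(x_j)$ and $right(x_i)\preceq right(x_j)$. A bipartite graph is a chain graph if the neighbourhoods on each side are totally ordered by inclusion. The chain decomposition of a connected convex bipartite graph $G$ with lex-convex ordering $\sigma$: let $x_{t_1}=right(y_1)$ and let $H_1$ be the (chain) subgraph induced by $N(y_1)\cup N(x_{t_1})$; remove $H_1$ from $G$; let $J_1$ be the set of vertices of $X$ that are isolated in $G-V(H_1)$; remove $J_1$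 as well; repeat on the remaining graph (with the inherited ordering) to obtain $H_2,J_2,\dots$, until what remains is a chain graph or a set of isolated vertices. Isolated vertices are not considered part of any $H_i$. Notation: $X_i=\{x_i,\dots,x_{n_1}\}$, $Y_i=\{y_i,\dots,y_{n_2}\}$. *)

theory Defs
  imports Main
begin

definition open_nbhd :: "'a set \<Rightarrow> ('a \<Rightarrow> 'a \<Rightarrow> bool) \<Rightarrow> 'a \<Rightarrow> 'a set" where
  "open_nbhd V E v = {u \<in> V. E v u}"

definition closed_nbhd :: "'a set \<Rightarrow> ('a \<Rightarrow> 'a \<Rightarrow> bool) \<Rightarrow> 'a \<Rightarrow> 'a set" where
  "closed_nbhd V E v = insert v (open_nbhd V E v)"

definition is_ved :: "'a set \<Rightarrow> ('a \<Rightarrow> 'a \<Rightarrow> bool) \<Rightarrow> 'a set \<Rightarrow> bool" where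
  "is_ved V E D \<longleftrightarrow> D \<subseteq> V \<and>
     (\<forall>u\<in>V. \<forall>v\<in>V. E u v \<longrightarrow> (closed_nbhd V E u \<union> closed_nbhd V E v) \<inter> D \<noteq> {})"

definition is_min_ved :: "'a set \<Rightarrow> ('a \<Rightarrow> 'a \<Rightarrow> bool) \<Rightarrow> 'a set \<Rightarrow> bool" where
  "is_min_ved V E D \<longleftrightarrow> is_ved V E D \<and> (\<forall>D'. is_ved V E D' \<longrightarrow> card D \<le> card D')"

definition graph_connected :: "'a set \<Rightarrow> ('a \<Rightarrow> 'a \<Rightarrow> bool) \<Rightarrow> bool" where
  "graph_connected V E \<longleftrightarrow>
     (\<forall>u\<in>V. \<forall>v\<in>V. (\<lambda>a b. a \<in> V \<and> b \<in> V \<and> E a b)\<^sup>*\<^sup>* u v)"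

text \<open>A bipartite graph with ordered sides: x_i is Inl i (1 \<le> i \<le> n1), y_j is Inr j (1 \<le> j \<le> n2);
  the ordering sigma = (x_1..x_n1, y_1..y_n2) is the index ordering. adj i j means x_i y_j is an edge.\<close>

definition bV :: "nat \<Rightarrow> nat \<Rightarrow> (nat + nat) set" where
  "bV n1 n2 = Inl ` {1..n1} \<union> Inr ` {1..n2}"

fun bE :: "(nat \<Rightarrow> nat \<Rightarrow> bool) \<Rightarrow> nat + nat \<Rightarrow> nat + nat \<Rightarrow> bool" where
  "bE adj (Inl i) (Inr j) = adj i j"
| "bE adj (Inr j) (Inl i) = adj i j"
| "bE adj _ _ = False"

definition xnbr :: "(nat \<Rightarrow> nat \<Rightarrow> bool) \<Rightarrow> nat \<Rightarrow> nat \<Rightarrow> nat set" where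
  "xnbr adj n2 i = {j \<in> {1..n2}. adj i j}"

definition ynbr :: "(nat \<Rightarrow> nat \<Rightarrow> bool) \<Rightarrow> nat \<Rightarrow> nat \<Rightarrow> nat set" where
  "ynbr adj n1 j = {i \<in> {1..n1}. adj i j}"

definition left_x :: "(nat \<Rightarrow> nat \<Rightarrow> bool) \<Rightarrow> nat \<Rightarrow> nat \<Rightarrow> nat" where
  "left_x adj n2 i = Min (xnbr adj n2 i)"

definition right_x :: "(nat \<Rightarrow> nat \<Rightarrow> bool) \<Rightarrow> nat \<Rightarrow> nat \<Rightarrow> nat" where
  "right_x adj n2 i = Max (xnbr adj n2 i)"

definition left_y :: "(nat \<Rightarrow> nat \<Rightarrow> bool) \<Rightarrow> nat \<Rightarrow> nat \<Rightarrow> nat" where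
  "left_y adj n1 j = Min (ynbr adj n1 j)"

definition right_y :: "(nat \<Rightarrow> nat \<Rightarrow> bool) \<Rightarrow> nat \<Rightarrow> nat \<Rightarrow> nat" where
  "right_y adj n1 j = Max (ynbr adj n1 j)"

definition convex_Y :: "nat \<Rightarrow> nat \<Rightarrow> (nat \<Rightarrow> nat \<Rightarrow> bool) \<Rightarrow> bool" where
  "convex_Y n1 n2 adj \<longleftrightarrow>
     (\<forall>i\<in>{1..n1}. \<forall>j1 j2 j. j1 \<in> xnbr adj n2 i \<and> j2 \<in> xnbr adj n2 i \<and> j1 \<le> j \<and> j \<le> j2
        \<longrightarrow> j \<in> xnbr adj n2 i)"

definition lex_convex :: "nat \<Rightarrow> nat \<Rightarrow> (nat \<Rightarrow> nat \<Rightarrow> bool) \<Rightarrow> bool" where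
  "lex_convex n1 n2 adj \<longleftrightarrow> convex_Y n1 n2 adj \<and>
     (\<forall>i j. 1 \<le> i \<and> i < j \<and> j \<le> n1 \<longrightarrow>
        left_x adj n2 i < left_x adj n2 j \<or>
        (left_x adj n2 i = left_x adj n2 j \<and> right_x adj n2 i \<le> right_x adj n2 j))"

definition chain_H1_vertices :: "nat \<Rightarrow> nat \<Rightarrow> (nat \<Rightarrow> nat \<Rightarrow> bool) \<Rightarrow> (nat + nat) set" where
  "chain_H1_vertices n1 n2 adj =
     open_nbhd (bV n1 n2) (bE adj) (Inr 1) \<union>
     open_nbhd (bV n1 n2) (bE adj) (Inl (right_y adj n1 1))"

definition chain_J1 :: "nat \<Rightarrow> nat \<Rightarrow> (nat \<Rightarrow> nat \<Rightarrow> bool) \<Rightarrow> nat set" where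
  "chain_J1 n1 n2 adj =
     {i \<in> {1..n1}. Inl i \<notin> chain_H1_vertices n1 n2 adj \<and>
        (\<forall>w \<in> bV n1 n2 - chain_H1_vertices n1 n2 adj. \<not> bE adj (Inl i) w)}"

end

theory Submission
  imports Defs
begin

(*
  Fix a minimum VED-set D and let s be the index of right(x_r). All neighbours of y_1 have left
  index 1, so the lex-convex order bounds their right index between r' and s; in particular
  N(x_r) = {y_1..y_s}, and J_1 consists of the x-vertices outside N(y_1) whose neighbourhood
  lies in {y_1..y_s}.
  If D contains an x-vertex with right index at most s, x_r dominates everything it dominates,
  so it can be swapped for x_r. Otherwise look at D within the zone {y_1..y_(s+1)} + N(y_(s+1)).
  Two vertices of D there can be traded for x_r and the neighbour x_b of y_(s+1) reaching
  furthest right: x_r takes over the edges ending in y_1..y_s, x_b those ending further right.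
  If D meets the zone only once, the edge x_1y_1 forces that vertex to be some y_j with j <= r',
  and every vertex of J_1 can only be dominated through y_j, so y_j is adjacent to all of J_1.
  Convexity then makes every neighbour of y_j adjacent to y_alpha, and y_j can be swapped for
  y_alpha.
*)

fun ve_dominates :: "(nat \<Rightarrow> nat \<Rightarrow> bool) \<Rightarrow> nat \<Rightarrow> nat \<Rightarrow> nat + nat \<Rightarrow> bool" where
  "ve_dominates adj i c (Inl i') \<longleftrightarrow> i' = i \<or> adj i' c"
| "ve_dominates adj i c (Inr c') \<longleftrightarrow> c' = c \<or> adj i c'"

lemma ex_min_ved: "\<exists>D. is_min_ved V E D"
proof -
  have "is_ved V E V"
    unfolding is_ved_def closed_nbhd_def by blast
  then show ?thesis
    using ex_has_least_nat[of "is_ved V E" V card] unfolding is_min_ved_def by blast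
qed

lemma card_exchange_le:
  assumes "finite D" "S \<subseteq> D" "card T \<le> card S"
  shows "card (D - S \<union> T) \<le> card D"
proof -
  have "card (D - S \<union> T) \<le> card (D - S) + card T"
    by (rule card_Un_le)
  also have "card (D - S) = card D - card S"
    using assms(1,2) by (simp add: card_Diff_subset finite_subset)
  also have "card S \<le> card D"
    using assms(1,2) by (rule card_mono)
  then have "card D - card S + card T \<le> card D"
    using assms(3) by linarith
  finally show ?thesis .
qed

lemma finite_xnbr: "finite (xnbr adj n2 i)"
  by (simp add: xnbr_def)

locale bip_graph =
  fixes n1 n2 :: nat and adj :: "nat \<Rightarrow> nat \<Rightarrow> bool"
  assumes edges: "\<And>i j. adj i j \<Longrightarrow> 1 \<le> i \<and> i \<le> n1 \<and> 1 \<le> j \<and> j \<le> n2"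
begin

lemma mem_xnbr: "adj i c \<Longrightarrow> c \<in> xnbr adj n2 i"
  using edges by (simp add: xnbr_def)

lemma le_right_x: "adj i c \<Longrightarrow> c \<le> right_x adj n2 i"
  unfolding right_x_def by (rule Max_ge[OF finite_xnbr mem_xnbr])

lemma adj_right_x: "adj i c \<Longrightarrow> adj i (right_x adj n2 i)"
  unfolding right_x_def using Max_in[OF finite_xnbr] mem_xnbr by (fastforce simp: xnbr_def)

lemma left_x_le: "adj i c \<Longrightarrow> left_x adj n2 i \<le> c"
  unfolding left_x_def by (rule Min_le[OF finite_xnbr mem_xnbr])

lemma adj_left_x: "adj i c \<Longrightarrow> adj i (left_x adj n2 i)"
  unfolding left_x_def using Min_in[OF finite_xnbr] mem_xnbr by (fastforce simp: xnbr_def)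

lemma le_right_y: "adj i c \<Longrightarrow> i \<le> right_y adj n1 c"
  unfolding right_y_def using edges by (intro Max_ge) (auto simp: ynbr_def)

lemma adj_right_y: "adj i c \<Longrightarrow> adj (right_y adj n1 c) c"
proof -
  assume "adj i c"
  then have "ynbr adj n1 c \<noteq> {}"
    using edges by (auto simp: ynbr_def)
  then show ?thesis
    unfolding right_y_def using Max_in[of "ynbr adj n1 c"] by (auto simp: ynbr_def)
qed

lemma ex_adj_max_right_x:
  assumes "adj i c"
  shows "\<exists>b. adj b c \<and> (\<forall>i'. adj i' c \<longrightarrow> right_x adj n2 i' \<le> right_x adj n2 b)"
proof (rule Lattices_Big.ex_has_greatest_nat)
  show "adj i c" by (fact assms)
  show "\<forall>i'. adj i' c \<longrightarrow> right_x adj n2 i' < Suc n2"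
    using adj_right_x edges by (meson le_imp_less_Suc)
qed

lemma closed_nbhd_Un_edge:
  assumes "adj i c"
  shows "closed_nbhd (bV n1 n2) (bE adj) (Inl i) \<union> closed_nbhd (bV n1 n2) (bE adj) (Inr c)
    = {w. ve_dominates adj i c w}"
proof (rule set_eqI)
  fix w
  show "w \<in> closed_nbhd (bV n1 n2) (bE adj) (Inl i) \<union> closed_nbhd (bV n1 n2) (bE adj) (Inr c)
    \<longleftrightarrow> w \<in> {w. ve_dominates adj i c w}"
    using assms by (cases w) (auto simp: closed_nbhd_def open_nbhd_def bV_def dest: edges)
qed

lemma is_ved_iff:
  "is_ved (bV n1 n2) (bE adj) D \<longleftrightarrow>
     D \<subseteq> bV n1 n2 \<and> (\<forall>i c. adj i c \<longrightarrow> (\<exists>w\<in>D. ve_dominates adj i c w))"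
proof -
  have "(\<forall>u\<in>bV n1 n2. \<forall>v\<in>bV n1 n2. bE adj u v \<longrightarrow>
          (closed_nbhd (bV n1 n2) (bE adj) u \<union> closed_nbhd (bV n1 n2) (bE adj) v) \<inter> D \<noteq> {})
     \<longleftrightarrow> (\<forall>i c. adj i c \<longrightarrow> (\<exists>w\<in>D. ve_dominates adj i c w))"
  proof safe
    fix i c
    assume "\<forall>u\<in>bV n1 n2. \<forall>v\<in>bV n1 n2. bE adj u v \<longrightarrow>
              (closed_nbhd (bV n1 n2) (bE adj) u \<union> closed_nbhd (bV n1 n2) (bE adj) v) \<inter> D \<noteq> {}"
      and "adj i c"
    moreover have "Inl i \<in> bV n1 n2" "Inr c \<in> bV n1 n2"
      using edges[OF \<open>adj i c\<close>] by (auto simp: bV_def)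
    ultimately show "\<exists>w\<in>D. ve_dominates adj i c w"
      using closed_nbhd_Un_edge[OF \<open>adj i c\<close>] by fastforce
  next
    fix u v
    assume "\<forall>i c. adj i c \<longrightarrow> (\<exists>w\<in>D. ve_dominates adj i c w)" and "bE adj u v"
      and "(closed_nbhd (bV n1 n2) (bE adj) u \<union> closed_nbhd (bV n1 n2) (bE adj) v) \<inter> D = {}"
    then show False
      using closed_nbhd_Un_edge by (cases u; cases v) (auto, blast+)
  qed
  then show ?thesis
    unfolding is_ved_def by blast
qed

lemma min_ved_exchange:
  assumes min: "is_min_ved (bV n1 n2) (bE adj) D" and "S \<subseteq> D" "T \<subseteq> bV n1 n2" "card T \<le> card S"
    and takeover: "\<And>i c w. adj i c \<Longrightarrow> w \<in> S \<Longrightarrow> ve_dominates adj i c w \<Longrightarrow>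
                           \<exists>w'\<in>T. ve_dominates adj i c w'"
  shows "is_min_ved (bV n1 n2) (bE adj) (D - S \<union> T)"
proof -
  have ved: "is_ved (bV n1 n2) (bE adj) D"
    using min unfolding is_min_ved_def by blast
  then have "finite D"
    unfolding is_ved_iff by (auto simp: bV_def intro: finite_subset)
  then have "card (D - S \<union> T) \<le> card D"
    using assms(2,4) by (rule card_exchange_le)
  moreover have "is_ved (bV n1 n2) (bE adj) (D - S \<union> T)"
    using ved assms(3) takeover unfolding is_ved_iff by blast
  ultimately show ?thesis
    using min unfolding is_min_ved_def by (meson le_trans)
qed

end

locale connected_lex_convex_graph = bip_graph +
  assumes n1: "1 \<le> n1" and n2: "1 \<le> n2"
    and conn: "graph_connected (bV n1 n2) (bE adj)"
    and lex: "lex_convex n1 n2 adj"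
begin

lemma adj_convex:
  assumes "adj i a" "adj i b" "a \<le> c" "c \<le> b"
  shows "adj i c"
proof -
  have "i \<in> {1..n1}" "a \<in> xnbr adj n2 i" "b \<in> xnbr adj n2 i"
    using assms(1,2) edges[OF assms(1)] edges[OF assms(2)] by (auto simp: xnbr_def)
  then have "c \<in> xnbr adj n2 i"
    using lex assms(3,4) unfolding lex_convex_def convex_Y_def by blast
  then show ?thesis
    by (simp add: xnbr_def)
qed

lemma lex_order:
  "1 \<le> i \<Longrightarrow> i < j \<Longrightarrow> j \<le> n1 \<Longrightarrow>
     left_x adj n2 i < left_x adj n2 j \<or>
     left_x adj n2 i = left_x adj n2 j \<and> right_x adj n2 i \<le> right_x adj n2 j"
  using lex unfolding lex_convex_def by blast

lemma ex_adj_x: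
  assumes "1 \<le> i" "i \<le> n1"
  shows "\<exists>c. adj i c"
proof -
  have "(\<lambda>a b. a \<in> bV n1 n2 \<and> b \<in> bV n1 n2 \<and> bE adj a b)\<^sup>*\<^sup>* (Inl i) (Inr 1)"
    using conn n2 assms unfolding graph_connected_def bV_def by auto
  then show ?thesis
  proof (cases rule: converse_rtranclpE)
    case (step w)
    then show ?thesis by (cases w) auto
  qed simp
qed

lemma ex_adj_y:
  assumes "1 \<le> c" "c \<le> n2"
  shows "\<exists>i. adj i c"
proof -
  have "(\<lambda>a b. a \<in> bV n1 n2 \<and> b \<in> bV n1 n2 \<and> bE adj a b)\<^sup>*\<^sup>* (Inr c) (Inl 1)"
    using conn n1 assms unfolding graph_connected_def bV_def by auto
  then show ?thesis
  proof (cases rule: converse_rtranclpE)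
    case (step w)
    then show ?thesis by (cases w) auto
  qed simp
qed

abbreviation r :: nat where "r \<equiv> right_y adj n1 1"
abbreviation s :: nat where "s \<equiv> right_x adj n2 r"
abbreviation r' :: nat where "r' \<equiv> right_x adj n2 1"

lemma adj_r_1: "adj r 1"
proof -
  obtain i where "adj i 1"
    using ex_adj_y n2 by blast
  then show ?thesis
    by (rule adj_right_y)
qed

lemma left_x_eq_1: "adj i 1 \<Longrightarrow> left_x adj n2 i = 1"
  using left_x_le adj_left_x edges by (metis le_antisym)

lemma adj_1_1: "adj 1 1"
proof (cases "r = 1")
  case True
  then show ?thesis
    using adj_r_1 by simp
next
  case False
  then have "1 < r" "r \<le> n1"
    using edges[OF adj_r_1] by auto
  then have "left_x adj n2 1 \<le> 1"
    using lex_order[of 1 r] left_x_eq_1[OF adj_r_1] by auto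
  moreover obtain c where c: "adj 1 c"
    using ex_adj_x n1 by blast
  ultimately have "left_x adj n2 1 = 1"
    using edges[OF adj_left_x[OF c]] by simp
  then show ?thesis
    using adj_left_x[OF c] by simp
qed

lemma right_x_le_s:
  assumes "adj i 1"
  shows "right_x adj n2 i \<le> s"
proof (cases "i = r")
  case False
  then have "1 \<le> i" "i < r" "r \<le> n1"
    using le_right_y[OF assms] edges[OF assms] edges[OF adj_r_1] by auto
  then show ?thesis
    using lex_order[of i r] left_x_eq_1[OF assms] left_x_eq_1[OF adj_r_1] by auto
qed simp

lemma r'_le_right_x:
  assumes "adj i 1"
  shows "r' \<le> right_x adj n2 i"
proof (cases "i = 1")
  case False
  then have "1 < i" "i \<le> n1"
    using edges[OF assms] by auto
  then show ?thesis
    using lex_order[of 1 i] left_x_eq_1[OF assms] left_x_eq_1[OF adj_1_1] by auto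
qed simp

lemma adj_1_r': "adj 1 r'"
  using adj_1_1 by (rule adj_right_x)

lemma r'_le_s: "r' \<le> s"
  using adj_1_1 by (rule right_x_le_s)

lemma adj_r_iff: "adj r c \<longleftrightarrow> 1 \<le> c \<and> c \<le> s"
  using edges le_right_x adj_convex[OF adj_r_1 adj_right_x[OF adj_r_1]] by blast

lemma ve_dominates_r: "adj i c \<Longrightarrow> c \<le> s \<Longrightarrow> ve_dominates adj i c (Inl r)"
  using adj_r_iff edges by simp

lemma chain_H1_vertices_eq:
  "chain_H1_vertices n1 n2 adj = Inl ` {i \<in> {1..n1}. adj i 1} \<union> Inr ` {1..s}"
proof -
  have "s \<le> n2"
    using edges adj_right_x[OF adj_r_1] by blast
  then have "open_nbhd (bV n1 n2) (bE adj) (Inl r) = Inr ` {1..s}"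
    using adj_r_iff by (auto simp: open_nbhd_def bV_def elim: bE.elims)
  moreover have "open_nbhd (bV n1 n2) (bE adj) (Inr 1) = Inl ` {i \<in> {1..n1}. adj i 1}"
    by (auto simp: open_nbhd_def bV_def elim: bE.elims)
  ultimately show ?thesis
    unfolding chain_H1_vertices_def by simp
qed

lemma chain_J1_eq: "chain_J1 n1 n2 adj = {i \<in> {1..n1}. \<not> adj i 1 \<and> right_x adj n2 i \<le> s}"
proof -
  have isolated_iff: "(\<forall>w \<in> bV n1 n2 - chain_H1_vertices n1 n2 adj. \<not> bE adj (Inl i) w)
      \<longleftrightarrow> right_x adj n2 i \<le> s" if "i \<in> {1..n1}" for i
  proof -
    have "(\<forall>w \<in> bV n1 n2 - chain_H1_vertices n1 n2 adj. \<not> bE adj (Inl i) w)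
        \<longleftrightarrow> (\<forall>c. adj i c \<longrightarrow> c \<le> s)"
    proof
      assume isolated: "\<forall>w \<in> bV n1 n2 - chain_H1_vertices n1 n2 adj. \<not> bE adj (Inl i) w"
      show "\<forall>c. adj i c \<longrightarrow> c \<le> s"
      proof (intro allI impI, rule ccontr)
        fix c
        assume "adj i c" "\<not> c \<le> s"
        then have "Inr c \<in> bV n1 n2 - chain_H1_vertices n1 n2 adj"
          using edges by (auto simp: bV_def chain_H1_vertices_eq)
        then show False
          using isolated \<open>adj i c\<close> bE.simps(1) by blast
      qed
    next
      assume "\<forall>c. adj i c \<longrightarrow> c \<le> s"
      then show "\<forall>w \<in> bV n1 n2 - chain_H1_vertices n1 n2 adj. \<not> bE adj (Inl i) w"
        by (auto simp: chain_H1_vertices_eq bV_def elim!: bE.elims dest: edges)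
    qed
    also have "\<dots> \<longleftrightarrow> right_x adj n2 i \<le> s"
      using ex_adj_x that adj_right_x le_right_x by (meson atLeastAtMost_iff le_trans)
    finally show ?thesis .
  qed
  show ?thesis
    unfolding chain_J1_def using isolated_iff by (auto simp: chain_H1_vertices_eq)
qed

definition zone :: "nat \<Rightarrow> (nat + nat) set" where
  "zone t = Inr ` {1..t} \<union> Inl ` ynbr adj n1 t"

lemma adj_if_zone_dominates:
  assumes b: "adj b t" "\<And>i. adj i t \<Longrightarrow> right_x adj n2 i \<le> right_x adj n2 b"
    and w: "w \<in> zone t" "ve_dominates adj i c w" and "adj i c" "t \<le> c"
  shows "adj b c"
proof -
  have "\<exists>a. adj a t \<and> adj a c"
  proof (cases w)
    case (Inl a)
    then show ?thesis
      using w \<open>adj i c\<close> by (auto simp: zone_def ynbr_def)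
  next
    case (Inr j)
    then have "j \<le> t" "j = c \<or> adj i j"
      using w by (auto simp: zone_def)
    then show ?thesis
      using adj_convex[OF _ \<open>adj i c\<close>] \<open>adj i c\<close> \<open>t \<le> c\<close> by (metis le_antisym)
  qed
  then obtain a where "adj a t" "adj a c"
    by blast
  then have "c \<le> right_x adj n2 b"
    using le_right_x b(2) by (meson le_trans)
  then show ?thesis
    using adj_convex[OF b(1) adj_right_x[OF b(1)] \<open>t \<le> c\<close>] by blast
qed

lemma min_ved_exchange_low_x:
  assumes "is_min_ved (bV n1 n2) (bE adj) D" "Inl i \<in> D" "right_x adj n2 i \<le> s"
  shows "is_min_ved (bV n1 n2) (bE adj) (D - {Inl i} \<union> {Inl r})"
proof (rule min_ved_exchange)
  show "{Inl r} \<subseteq> bV n1 n2"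
    using edges[OF adj_r_1] by (simp add: bV_def)
  fix i' c w
  assume "adj i' c" "w \<in> {Inl i}" "ve_dominates adj i' c w"
  then have "adj i c"
    by auto
  then show "\<exists>w'\<in>{Inl r}. ve_dominates adj i' c w'"
    using ve_dominates_r[OF \<open>adj i' c\<close>] le_right_x assms(3) by (meson le_trans singletonI)
qed (use assms in auto)

lemma min_ved_exchange_two_in_zone:
  assumes "s < n2" "is_min_ved (bV n1 n2) (bE adj) D"
    and "w1 \<in> D" "w2 \<in> D" "w1 \<noteq> w2" "w1 \<in> zone (Suc s)" "w2 \<in> zone (Suc s)"
  shows "\<exists>b. is_min_ved (bV n1 n2) (bE adj) (D - {w1, w2} \<union> {Inl r, Inl b})"
proof -
  obtain i where "adj i (Suc s)"
    using ex_adj_y[of "Suc s"] assms(1) by auto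
  then obtain b where b: "adj b (Suc s)" "\<And>i. adj i (Suc s) \<Longrightarrow> right_x adj n2 i \<le> right_x adj n2 b"
    using ex_adj_max_right_x by blast
  have "is_min_ved (bV n1 n2) (bE adj) (D - {w1, w2} \<union> {Inl r, Inl b})"
  proof (rule min_ved_exchange)
    show "{Inl r, Inl b} \<subseteq> bV n1 n2"
      using edges[OF adj_r_1] edges[OF b(1)] by (simp add: bV_def)
    show "card {Inl r, Inl b} \<le> card {w1, w2}"
      using assms(5) by (simp add: card_insert_if)
    fix i c w
    assume "adj i c" "w \<in> {w1, w2}" "ve_dominates adj i c w"
    then have "c \<le> s \<or> adj b c"
      using adj_if_zone_dominates[OF b] assms(6,7) by (metis insertE not_less_eq_eq singletonD)
    then show "\<exists>w'\<in>{Inl r, Inl b}. ve_dominates adj i c w'"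
      using ve_dominates_r[OF \<open>adj i c\<close>] by auto
  qed (use assms in auto)
  then show ?thesis ..
qed

lemma ex_y_upto_r'_in_ved:
  assumes "is_ved (bV n1 n2) (bE adj) D" "\<And>i. Inl i \<in> D \<Longrightarrow> s < right_x adj n2 i"
  shows "\<exists>j. Inr j \<in> D \<and> 1 \<le> j \<and> j \<le> r'"
proof -
  obtain w where w: "w \<in> D" "ve_dominates adj 1 1 w"
    using assms(1) adj_1_1 unfolding is_ved_iff by blast
  show ?thesis
  proof (cases w)
    case (Inl i)
    then have "adj i 1"
      using w adj_1_1 by auto
    then show ?thesis
      using right_x_le_s assms(2) w(1) Inl by (meson not_le)
  next
    case (Inr j)
    then have "j = 1 \<or> adj 1 j"
      using w by simp
    then show ?thesis
      using w(1) Inr le_right_x edges adj_1_r' by blast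
  qed
qed

lemma chain_J1_adj_if_zone_unique:
  assumes ved: "is_ved (bV n1 n2) (bE adj) D" and no_low_x: "\<And>i. Inl i \<in> D \<Longrightarrow> s < right_x adj n2 i"
    and unique: "\<And>w. w \<in> D \<Longrightarrow> w \<in> zone (Suc s) \<Longrightarrow> w = Inr j"
    and "k \<in> chain_J1 n1 n2 adj"
  shows "adj k j"
proof -
  have k: "1 \<le> k" "k \<le> n1" "right_x adj n2 k \<le> s"
    using \<open>k \<in> chain_J1 n1 n2 adj\<close> unfolding chain_J1_eq by auto
  obtain c where c: "adj k c"
    using ex_adj_x k by blast
  then have "c \<le> s"
    using le_right_x k(3) by (meson le_trans)
  obtain w where w: "w \<in> D" "ve_dominates adj k c w"
    using ved c unfolding is_ved_iff by blast
  show ?thesis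
  proof (cases w)
    case (Inl i)
    then have "adj i c" "s < right_x adj n2 i"
      using w c k(3) no_low_x by (auto simp: not_le)
    then have "adj i (Suc s)"
      using adj_convex[OF _ adj_right_x] \<open>c \<le> s\<close> by (meson Suc_leI le_Suc_eq)
    then have "w \<in> zone (Suc s)"
      using Inl edges by (auto simp: zone_def ynbr_def)
    then show ?thesis
      using unique w(1) Inl by blast
  next
    case (Inr c')
    then have "c' = c \<or> adj k c'"
      using w by simp
    then have "w \<in> zone (Suc s)"
      using Inr c \<open>c \<le> s\<close> le_right_x k(3) edges by (fastforce simp: zone_def)
    then show ?thesis
      using unique w(1) Inr \<open>c' = c \<or> adj k c'\<close> c by blast
  qed
qed

abbreviation alpha_candidates :: "nat set" where
  "alpha_candidates \<equiv> {j. 1 \<le> j \<and> j \<le> r' \<and> (\<forall>k \<in> chain_J1 n1 n2 adj. adj k j)}"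

lemma adj_if_alpha_candidate:
  assumes "\<alpha> \<in> alpha_candidates" "adj i j" "j \<le> \<alpha>"
  shows "adj i \<alpha>"
proof -
  consider "s < right_x adj n2 i" | "adj i 1" | "right_x adj n2 i \<le> s" "\<not> adj i 1"
    by linarith
  then show ?thesis
  proof cases
    case 1
    then show ?thesis
      using adj_convex[OF assms(2) adj_right_x[OF assms(2)] assms(3)] assms(1) r'_le_s by simp
  next
    case 2
    then show ?thesis
      using adj_convex[OF 2 adj_right_x[OF 2]] r'_le_right_x[OF 2] assms(1) by simp
  next
    case 3
    then have "i \<in> chain_J1 n1 n2 adj"
      using edges[OF assms(2)] unfolding chain_J1_eq by simp
    then show ?thesis
      using assms(1) by blast
  qed
qed

lemma Max_alpha_candidates:
  assumes "j \<in> alpha_candidates"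
  shows "Max alpha_candidates \<in> alpha_candidates" "j \<le> Max alpha_candidates"
proof -
  have "finite alpha_candidates"
    by (rule finite_subset[of _ "{..r'}"]) auto
  then show "Max alpha_candidates \<in> alpha_candidates" "j \<le> Max alpha_candidates"
    using assms Max_in Max_ge by blast+
qed

lemma min_ved_exchange_alpha:
  assumes "is_min_ved (bV n1 n2) (bE adj) D" "Inr j \<in> D" "j \<in> alpha_candidates"
  shows "is_min_ved (bV n1 n2) (bE adj) (D - {Inr j} \<union> {Inr (Max alpha_candidates)})"
proof (rule min_ved_exchange)
  note Max = Max_alpha_candidates[OF assms(3)]
  show "{Inr (Max alpha_candidates)} \<subseteq> bV n1 n2"
    using Max(1) edges[OF adj_1_r'] by (auto simp: bV_def)
  fix i c w
  assume "adj i c" "w \<in> {Inr j}" "ve_dominates adj i c w"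
  then have "adj i j"
    by auto
  then have "adj i (Max alpha_candidates)"
    using adj_if_alpha_candidate[OF Max(1)] Max(2) by blast
  then show "\<exists>w'\<in>{Inr (Max alpha_candidates)}. ve_dominates adj i c w'"
    by simp
qed (use assms(1,2) in simp_all)

lemma adj_1_Max_alpha_candidates:
  assumes "j \<in> alpha_candidates"
  shows "adj 1 (Max alpha_candidates)"
  using adj_convex[OF adj_1_1 adj_1_r'] Max_alpha_candidates(1)[OF assms] by simp

theorem ex_min_ved_r_or_alpha:
  assumes "s < n2"
  shows "(\<exists>D. is_min_ved (bV n1 n2) (bE adj) D \<and> Inl r \<in> D) \<or>
         alpha_candidates \<noteq> {} \<and> adj 1 (Max alpha_candidates) \<and>
         (\<exists>D. is_min_ved (bV n1 n2) (bE adj) D \<and> Inr (Max alpha_candidates) \<in> D)"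
proof -
  obtain D where D: "is_min_ved (bV n1 n2) (bE adj) D"
    using ex_min_ved by blast
  then have ved: "is_ved (bV n1 n2) (bE adj) D"
    unfolding is_min_ved_def by blast
  show ?thesis
  proof (cases "\<exists>i. Inl i \<in> D \<and> right_x adj n2 i \<le> s")
    case True
    then show ?thesis
      using min_ved_exchange_low_x[OF D] by blast
  next
    case False
    then have no_low_x: "\<And>i. Inl i \<in> D \<Longrightarrow> s < right_x adj n2 i"
      by (meson not_le)
    then obtain j where j: "Inr j \<in> D" "1 \<le> j" "j \<le> r'"
      using ex_y_upto_r'_in_ved[OF ved] by blast
    show ?thesis
    proof (cases "\<exists>w\<in>D. w \<in> zone (Suc s) \<and> w \<noteq> Inr j")
      case True
      moreover have "Inr j \<in> zone (Suc s)"
        using j r'_le_s by (simp add: zone_def)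
      ultimately show ?thesis
        using min_ved_exchange_two_in_zone[OF assms D] j(1) by blast
    next
      case False
      then have "j \<in> alpha_candidates"
        using chain_J1_adj_if_zone_unique[OF ved no_low_x] j by blast
      then show ?thesis
        using min_ved_exchange_alpha[OF D j(1)] adj_1_Max_alpha_candidates by blast
    qed
  qed
qed

end

theorem lemma1:
  fixes n1 n2 :: nat and adj :: "nat \<Rightarrow> nat \<Rightarrow> bool"
  assumes n1: "1 \<le> n1" and n2: "1 \<le> n2"
    and edges: "\<And>i j. adj i j \<Longrightarrow> 1 \<le> i \<and> i \<le> n1 \<and> 1 \<le> j \<and> j \<le> n2"
    and conn: "graph_connected (bV n1 n2) (bE adj)"
    and lex: "lex_convex n1 n2 adj"
    and s_lt: "right_x adj n2 (right_y adj n1 1) < n2"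
  shows "(\<exists>D. is_min_ved (bV n1 n2) (bE adj) D \<and> Inl (right_y adj n1 1) \<in> D) \<or>
         (let A = {i. 1 \<le> i \<and> i \<le> right_x adj n2 1 \<and> (\<forall>k \<in> chain_J1 n1 n2 adj. adj k i)}
          in A \<noteq> {} \<and> adj 1 (Max A) \<and>
             (\<exists>D. is_min_ved (bV n1 n2) (bE adj) D \<and> Inr (Max A) \<in> D))"
proof -
  interpret connected_lex_convex_graph n1 n2 adj
    by unfold_locales (fact edges n1 n2 conn lex)+
  show ?thesis
    using ex_min_ved_r_or_alpha[OF s_lt] unfolding Let_def .
qed

end
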